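(* There exist a finite graded poset $P$ with $\hat0$ and two CW-labelings $\lambda_1$ and $\lambda_2$ of $P$ such that the posets $Q_{\lambda_1}(P)$ and $Q_{\lambda_2}(P)$ are not isomorphic.
   Context: C-labelings: a maximal chain is an unrefinable chain from $\hat0$ to a maximal element. A C-labeling assigns to each pair $(\mathbf m,e)$, $\mathbf m$ a maximal chain and $e$ a cover relation of $\mathbf m$, a label in a poset $\Lambda$, such that maximal chains coinciding along their bottom $d$ cover relations have equal labels there. A rooted interval $[x,y]_{\mathbf r}$ is an interval with a saturated chain $\mathbf r$ from $\hat0$ to $x$, maximal chains $\mathbf c$ of $[x,y]$ labeled as in $\mathbf r\cup\mathbf c$. Increasing = strictly increasing label word; ascent-free = no consecutive labels $a<b$. CR-labeling: each rooted interval has exactly one increasing maximal chain. Rank two switching property: for every maximal chain $\mathbf m:\hat0=m_0\lessdot\cdots\lessdot m_k$ and $i<k$ with an ascent at rank $i$ there is a unique $m_i'\neq m_i$ such that replacing $m_i$ by $m_i'$ gives a maximal chain with the same labels except that those at ranks $i,i+1$ are swapped, and $m_i'$ is the same for all maximal chains agreeing with $\mathbf m$ in $m_0,\dots,m_{i+1}$ (quadratic exchange). CW-labeling: CR-labeling with the rank two switching property such that in each rooted interval distinct ascent-free maximal chains have distinct label words. $Q_\lambda(P)$: $C(P)$ is the set of saturated chains from $\hat0$ ordered by inclusion; $\mathbf c_1\sim_\lambda\mathbf c_2$ iff they end at the same $y$ and are connected by quadratic exchanges (forwards or backwards) among maximal chains of $[\hat0,y]$; $Q_\lambda(P)$ is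 the set of classes ordered by the transitive closure of: $X\le Y$ if some $\mathbf c\in X$, $\mathbf d\in Y$ have $\mathbf c\subseteq\mathbf d$. *)

theory Defs
  imports Main
begin

(* The j-th cover relation (1 <= j <= k) of a chain is (m_(j-1), m_j). *)

definition partial_order_on' :: "'a set \<Rightarrow> ('a \<Rightarrow> 'a \<Rightarrow> bool) \<Rightarrow> bool" where
  "partial_order_on' A le \<longleftrightarrow>
     (\<forall>x\<in>A. le x x) \<and>
     (\<forall>x\<in>A. \<forall>y\<in>A. le x y \<and> le y x \<longrightarrow> x = y) \<and>
     (\<forall>x\<in>A. \<forall>y\<in>A. \<forall>z\<in>A. le x y \<and> le y z \<longrightarrow> le x z)"

definition covers :: "nat set \<Rightarrow> (nat \<Rightarrow> nat \<Rightarrow> bool) \<Rightarrow> nat \<Rightarrow> nat \<Rightarrow> bool" where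
  "covers P le x y \<longleftrightarrow> x \<in> P \<and> y \<in> P \<and> le x y \<and> x \<noteq> y \<and>
     \<not> (\<exists>z\<in>P. le x z \<and> le z y \<and> z \<noteq> x \<and> z \<noteq> y)"

definition sat_chain :: "nat set \<Rightarrow> (nat \<Rightarrow> nat \<Rightarrow> bool) \<Rightarrow> nat list \<Rightarrow> bool" where
  "sat_chain P le xs \<longleftrightarrow> xs \<noteq> [] \<and> set xs \<subseteq> P \<and>
     (\<forall>i. Suc i < length xs \<longrightarrow> covers P le (xs ! i) (xs ! Suc i))"

definition rooted_chain :: "nat set \<Rightarrow> (nat \<Rightarrow> nat \<Rightarrow> bool) \<Rightarrow> nat list \<Rightarrow> bool" where
  "rooted_chain P le xs \<longleftrightarrow> sat_chain P le xs \<and> (\<forall>x\<in>P. le (hd xs) x)"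

definition max_chain :: "nat set \<Rightarrow> (nat \<Rightarrow> nat \<Rightarrow> bool) \<Rightarrow> nat list \<Rightarrow> bool" where
  "max_chain P le m \<longleftrightarrow> rooted_chain P le m \<and> (\<forall>y\<in>P. le (last m) y \<longrightarrow> y = last m)"

definition interval_chain :: "nat set \<Rightarrow> (nat \<Rightarrow> nat \<Rightarrow> bool) \<Rightarrow> nat \<Rightarrow> nat \<Rightarrow> nat list \<Rightarrow> bool" where
  "interval_chain P le x y c \<longleftrightarrow> sat_chain P le c \<and> hd c = x \<and> last c = y"

(* finite graded poset with \<hat>0: all saturated chains from \<hat>0 to the same element
   have the same length (equivalently, there is a rank function) *)
definition finite_graded_poset_0 :: "nat set \<Rightarrow> (nat \<Rightarrow> nat \<Rightarrow> bool) \<Rightarrow> bool" where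
  "finite_graded_poset_0 P le \<longleftrightarrow> finite P \<and> partial_order_on' P le \<and>
     (\<exists>z\<in>P. \<forall>x\<in>P. le z x) \<and>
     (\<forall>c d. rooted_chain P le c \<and> rooted_chain P le d \<and> last c = last d \<longrightarrow>
        length c = length d)"

definition lless :: "('a \<Rightarrow> 'a \<Rightarrow> bool) \<Rightarrow> 'a \<Rightarrow> 'a \<Rightarrow> bool" where
  "lless lle a b \<longleftrightarrow> lle a b \<and> a \<noteq> b"

(* C-labeling: lam m j is the label of the j-th cover relation of the maximal chain m;
   labels lie in the label poset (L, lle). *)
definition C_labeling :: "nat set \<Rightarrow> (nat \<Rightarrow> nat \<Rightarrow> bool) \<Rightarrow> nat set \<Rightarrow> (nat \<Rightarrow> nat \<Rightarrow> bool)
     \<Rightarrow> (nat list \<Rightarrow> nat \<Rightarrow> nat) \<Rightarrow> bool" where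
  "C_labeling P le L lle lam \<longleftrightarrow> partial_order_on' L lle \<and>
     (\<forall>m. max_chain P le m \<longrightarrow> (\<forall>j. 1 \<le> j \<and> j < length m \<longrightarrow> lam m j \<in> L)) \<and>
     (\<forall>m m' d. max_chain P le m \<and> max_chain P le m' \<and> take (Suc d) m = take (Suc d) m' \<longrightarrow>
        (\<forall>j. 1 \<le> j \<and> j \<le> d \<and> j < length m \<longrightarrow> lam m j = lam m' j))"

(* label of the j-th cover of a saturated chain s from \<hat>0, read off from any maximal
   chain extending s (well defined for a C-labeling) *)
definition chain_label :: "nat set \<Rightarrow> (nat \<Rightarrow> nat \<Rightarrow> bool) \<Rightarrow> (nat list \<Rightarrow> nat \<Rightarrow> nat)
     \<Rightarrow> nat list \<Rightarrow> nat \<Rightarrow> nat" where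
  "chain_label P le lam s j = lam (SOME m. max_chain P le m \<and> take (length s) m = s) j"

(* label word of the maximal chain c of [x,y] in the rooted interval [x,y]_r,
   labeled as in r \<union> c *)
definition label_word :: "nat set \<Rightarrow> (nat \<Rightarrow> nat \<Rightarrow> bool) \<Rightarrow> (nat list \<Rightarrow> nat \<Rightarrow> nat)
     \<Rightarrow> nat list \<Rightarrow> nat list \<Rightarrow> nat list" where
  "label_word P le lam r c =
     map (chain_label P le lam (r @ tl c)) [length r ..< length r + length c - 1]"

definition increasing_word :: "(nat \<Rightarrow> nat \<Rightarrow> bool) \<Rightarrow> nat list \<Rightarrow> bool" where
  "increasing_word lle w \<longleftrightarrow> (\<forall>i. Suc i < length w \<longrightarrow> lless lle (w ! i) (w ! Suc i))"

definition ascent_free_word :: "(nat \<Rightarrow> nat \<Rightarrow> bool) \<Rightarrow> nat list \<Rightarrow> bool" where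
  "ascent_free_word lle w \<longleftrightarrow> (\<forall>i. Suc i < length w \<longrightarrow> \<not> lless lle (w ! i) (w ! Suc i))"

definition CR_labeling :: "nat set \<Rightarrow> (nat \<Rightarrow> nat \<Rightarrow> bool) \<Rightarrow> nat set \<Rightarrow> (nat \<Rightarrow> nat \<Rightarrow> bool)
     \<Rightarrow> (nat list \<Rightarrow> nat \<Rightarrow> nat) \<Rightarrow> bool" where
  "CR_labeling P le L lle lam \<longleftrightarrow> C_labeling P le L lle lam \<and>
     (\<forall>r y. rooted_chain P le r \<and> y \<in> P \<and> le (last r) y \<longrightarrow>
        (\<exists>!c. interval_chain P le (last r) y c \<and> increasing_word lle (label_word P le lam r c)))"

definition ascent_at :: "(nat \<Rightarrow> nat \<Rightarrow> bool) \<Rightarrow> (nat list \<Rightarrow> nat \<Rightarrow> nat) \<Rightarrow> nat list \<Rightarrow> nat \<Rightarrow> bool" where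
  "ascent_at lle lam m i \<longleftrightarrow> 1 \<le> i \<and> Suc i < length m \<and> lless lle (lam m i) (lam m (Suc i))"

definition switches :: "nat set \<Rightarrow> (nat \<Rightarrow> nat \<Rightarrow> bool) \<Rightarrow> (nat list \<Rightarrow> nat \<Rightarrow> nat)
     \<Rightarrow> nat list \<Rightarrow> nat \<Rightarrow> nat \<Rightarrow> bool" where
  "switches P le lam m i z \<longleftrightarrow> z \<noteq> m ! i \<and> max_chain P le (m[i := z]) \<and>
     (\<forall>j. 1 \<le> j \<and> j < length m \<longrightarrow>
        lam (m[i := z]) j = (if j = i then lam m (Suc i) else if j = Suc i then lam m i else lam m j))"

definition rank_two_switching :: "nat set \<Rightarrow> (nat \<Rightarrow> nat \<Rightarrow> bool) \<Rightarrow> (nat \<Rightarrow> nat \<Rightarrow> bool)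
     \<Rightarrow> (nat list \<Rightarrow> nat \<Rightarrow> nat) \<Rightarrow> bool" where
  "rank_two_switching P le lle lam \<longleftrightarrow>
     (\<forall>m i. max_chain P le m \<and> ascent_at lle lam m i \<longrightarrow>
        (\<exists>!z. switches P le lam m i z) \<and>
        (\<forall>m' z z'. max_chain P le m' \<and> take (i + 2) m' = take (i + 2) m \<and>
            switches P le lam m i z \<and> switches P le lam m' i z' \<longrightarrow> z = z'))"

definition CW_labeling :: "nat set \<Rightarrow> (nat \<Rightarrow> nat \<Rightarrow> bool) \<Rightarrow> nat set \<Rightarrow> (nat \<Rightarrow> nat \<Rightarrow> bool)
     \<Rightarrow> (nat list \<Rightarrow> nat \<Rightarrow> nat) \<Rightarrow> bool" where
  "CW_labeling P le L lle lam \<longleftrightarrow> CR_labeling P le L lle lam \<and> rank_two_switching P le lle lam \<and>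
     (\<forall>r y c c'. rooted_chain P le r \<and> interval_chain P le (last r) y c \<and>
        interval_chain P le (last r) y c' \<and>
        ascent_free_word lle (label_word P le lam r c) \<and>
        ascent_free_word lle (label_word P le lam r c') \<and> c \<noteq> c' \<longrightarrow>
        label_word P le lam r c \<noteq> label_word P le lam r c')"

(* one quadratic exchange (forward direction) on a saturated chain c from \<hat>0 to y,
   i.e. on a maximal chain of [\<hat>0,y]: performed via a maximal chain m of P extending c *)
definition quad_exchange :: "nat set \<Rightarrow> (nat \<Rightarrow> nat \<Rightarrow> bool) \<Rightarrow> (nat \<Rightarrow> nat \<Rightarrow> bool)
     \<Rightarrow> (nat list \<Rightarrow> nat \<Rightarrow> nat) \<Rightarrow> nat list \<Rightarrow> nat list \<Rightarrow> bool" where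
  "quad_exchange P le lle lam c c' \<longleftrightarrow>
     (\<exists>m i z. max_chain P le m \<and> take (length c) m = c \<and> Suc i < length c \<and>
        ascent_at lle lam m i \<and> switches P le lam m i z \<and> c' = c[i := z])"

definition Q_equiv :: "nat set \<Rightarrow> (nat \<Rightarrow> nat \<Rightarrow> bool) \<Rightarrow> (nat \<Rightarrow> nat \<Rightarrow> bool)
     \<Rightarrow> (nat list \<Rightarrow> nat \<Rightarrow> nat) \<Rightarrow> nat list \<Rightarrow> nat list \<Rightarrow> bool" where
  "Q_equiv P le lle lam c1 c2 \<longleftrightarrow> rooted_chain P le c1 \<and> rooted_chain P le c2 \<and>
     last c1 = last c2 \<and>
     (\<lambda>a b. quad_exchange P le lle lam a b \<or> quad_exchange P le lle lam b a)\<^sup>*\<^sup>* c1 c2"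

definition Q_carrier :: "nat set \<Rightarrow> (nat \<Rightarrow> nat \<Rightarrow> bool) \<Rightarrow> (nat \<Rightarrow> nat \<Rightarrow> bool)
     \<Rightarrow> (nat list \<Rightarrow> nat \<Rightarrow> nat) \<Rightarrow> nat list set set" where
  "Q_carrier P le lle lam =
     {{d. Q_equiv P le lle lam c d} | c. rooted_chain P le c}"

definition Q_le :: "nat set \<Rightarrow> (nat \<Rightarrow> nat \<Rightarrow> bool) \<Rightarrow> (nat \<Rightarrow> nat \<Rightarrow> bool)
     \<Rightarrow> (nat list \<Rightarrow> nat \<Rightarrow> nat) \<Rightarrow> nat list set \<Rightarrow> nat list set \<Rightarrow> bool" where
  "Q_le P le lle lam =
     (\<lambda>X Y. X \<in> Q_carrier P le lle lam \<and> Y \<in> Q_carrier P le lle lam \<and>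
        (\<exists>c\<in>X. \<exists>d\<in>Y. set c \<subseteq> set d))\<^sup>*\<^sup>*"

definition order_iso :: "'a set \<Rightarrow> ('a \<Rightarrow> 'a \<Rightarrow> bool) \<Rightarrow> 'b set \<Rightarrow> ('b \<Rightarrow> 'b \<Rightarrow> bool) \<Rightarrow> bool" where
  "order_iso A ra B rb \<longleftrightarrow>
     (\<exists>f. bij_betw f A B \<and> (\<forall>x\<in>A. \<forall>y\<in>A. ra x y \<longleftrightarrow> rb (f x) (f y)))"

end

theory Submission
  imports Defs
begin

(* P consists of a bottom 0, atoms 1, 2, 3 and two maximal elements, 4 above all atoms and
   5 above 1 and 2. Both labelings are edge labelings giving the cover 0 < a the label a; they
   differ in how the ascents along 0 < 1 < 4 and 0 < 1 < 5 are switched. For the first labeling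
   both ascents are switched through the atom 2, so the chains 0 < 1 and 0 < 2 lie below exactly
   the same two classes of maximal chains: their classes are twins in Q, i.e. distinct elements
   comparable, in the same direction, to exactly the same other elements. For the second
   labeling 0 < 1 < 4 is switched through 3 and 0 < 1 < 5 through 2, and Q has no twins.
   Q is computed by choosing a representative chain in every quadratic-exchange class. *)

section \<open>Saturated chains and label words\<close>

lemma sat_chain_Cons:
  "sat_chain P le (x # ys) \<longleftrightarrow>
     (ys = [] \<and> x \<in> P) \<or> (ys \<noteq> [] \<and> covers P le x (hd ys) \<and> sat_chain P le ys)"
proof (cases ys)
  case Nil
  then show ?thesis by (simp add: sat_chain_def)
next
  case (Cons y zs)
  moreover have "covers P le x y \<Longrightarrow> x \<in> P" by (simp add: covers_def)
  ultimately show ?thesis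
    by (auto simp: sat_chain_def less_Suc_eq_0_disj)
qed

lemma sat_chain_append:
  assumes "sat_chain P le r" "sat_chain P le c" "hd c = last r"
  shows "sat_chain P le (r @ tl c)"
  using assms
proof (induction r)
  case Nil
  then show ?case by (simp add: sat_chain_def)
next
  case (Cons x r)
  show ?case
  proof (cases r)
    case Nil
    then show ?thesis using Cons.prems by (cases c) (auto simp: sat_chain_def)
  next
    case (Cons y r')
    then show ?thesis using Cons.IH Cons.prems by (auto simp: sat_chain_Cons)
  qed
qed

lemma ex1_iff_length_filter:
  assumes "distinct xs"
  shows "(\<exists>!x. x \<in> set xs \<and> Q x) \<longleftrightarrow> length (filter Q xs) = 1"
proof -
  have "length (filter Q xs) = 1 \<longleftrightarrow> (\<exists>x. {x. Q x} \<inter> set xs = {x})"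
    using assms by (simp add: distinct_length_filter card_1_singleton_iff)
  also have "\<dots> \<longleftrightarrow> (\<exists>!x. x \<in> set xs \<and> Q x)"
    by (auto simp: set_eq_iff) metis
  finally show ?thesis ..
qed

lemma rtranclp_eq_reflclp_if_between:
  assumes "\<And>a b. R a b \<Longrightarrow> a = b \<or> B a b" "\<And>a b. B a b \<Longrightarrow> R a b" "transp B"
  shows "R\<^sup>*\<^sup>* a b \<longleftrightarrow> a = b \<or> B a b"
proof
  assume "R\<^sup>*\<^sup>* a b"
  then show "a = b \<or> B a b"
  proof (induction rule: rtranclp_induct)
    case (step y z)
    from \<open>R y z\<close> have "y = z \<or> B y z" by (rule assms(1))
    then show ?case using step.IH assms(3) by (auto dest: transpD)
  qed simp
qed (use assms in auto)

lemma increasing_word_Cons_Cons [simp]: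
  "increasing_word lle (a # b # w) \<longleftrightarrow> lless lle a b \<and> increasing_word lle (b # w)"
  by (auto simp: increasing_word_def nth_Cons split: nat.splits)

lemma increasing_word_short [simp]: "increasing_word lle []" "increasing_word lle [a]"
  by (simp_all add: increasing_word_def)

lemma ascent_free_word_Cons_Cons [simp]:
  "ascent_free_word lle (a # b # w) \<longleftrightarrow> \<not> lless lle a b \<and> ascent_free_word lle (b # w)"
  by (auto simp: ascent_free_word_def nth_Cons split: nat.splits)

lemma ascent_free_word_short [simp]: "ascent_free_word lle []" "ascent_free_word lle [a]"
  by (simp_all add: ascent_free_word_def)

lemma lless_le_nat [simp]: "lless (\<le>) a (b :: nat) \<longleftrightarrow> a < b"
  by (auto simp: lless_def)

section \<open>Edge labelings\<close>

definition edge_labeling :: "(nat \<Rightarrow> nat \<Rightarrow> nat) \<Rightarrow> nat list \<Rightarrow> nat \<Rightarrow> nat" where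
  "edge_labeling f m j = f (m ! (j - 1)) (m ! j)"

definition edge_word :: "(nat \<Rightarrow> nat \<Rightarrow> nat) \<Rightarrow> nat list \<Rightarrow> nat list" where
  "edge_word f c = map2 f c (tl c)"

lemma edge_word_simps [simp]:
  "edge_word f [] = []"
  "edge_word f [a] = []"
  "edge_word f (a # b # c) = f a b # edge_word f (b # c)"
  by (simp_all add: edge_word_def)

lemma C_labeling_edge_labeling:
  assumes "partial_order_on' UNIV lle"
  shows "C_labeling P le UNIV lle (edge_labeling f)"
  unfolding C_labeling_def
proof (intro conjI allI impI)
  fix m m' d j
  assume prefix: "max_chain P le m \<and> max_chain P le m' \<and> take (Suc d) m = take (Suc d) m'"
    and j: "1 \<le> j \<and> j \<le> d \<and> j < length m"
  have same: "m ! k = m' ! k" if "k < Suc d" for k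
    using prefix nth_take[OF that, of m] nth_take[OF that, of m'] by simp
  have idx: "j - 1 < Suc d" "j < Suc d"
    using j by auto
  show "edge_labeling f m j = edge_labeling f m' j"
    using same[OF idx(1)] same[OF idx(2)] by (simp add: edge_labeling_def)
qed (use assms in simp_all)

lemma chain_label_edge_labeling:
  assumes "max_chain P le m" "take (length s) m = s" "j < length s"
  shows "chain_label P le (edge_labeling f) s j = f (s ! (j - 1)) (s ! j)"
proof -
  define m' where "m' = (SOME m. max_chain P le m \<and> take (length s) m = s)"
  have "take (length s) m' = s"
    unfolding m'_def by (rule someI2[of _ m]) (use assms in simp_all)
  then have "m' ! k = s ! k" if "k < length s" for k
    using nth_take[OF that, of m'] by simp
  then show ?thesis
    using assms(3) by (simp add: chain_label_def edge_labeling_def m'_def[symmetric])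
qed

lemma label_word_edge_labeling:
  assumes extend: "\<And>s. rooted_chain P le s \<Longrightarrow> \<exists>m. max_chain P le m \<and> take (length s) m = s"
    and r: "rooted_chain P le r" and c: "sat_chain P le c" "hd c = last r"
  shows "label_word P le (edge_labeling f) r c = edge_word f c"
proof -
  have "r \<noteq> []" "c \<noteq> []" using r c by (simp_all add: rooted_chain_def sat_chain_def)
  define s where "s = r @ tl c"
  have "rooted_chain P le s"
    using r c sat_chain_append[of P le r c] \<open>r \<noteq> []\<close> by (simp add: rooted_chain_def s_def)
  then obtain m where m: "max_chain P le m" "take (length s) m = s" using extend by blast
  have s_alt: "s = butlast r @ c"
  proof -
    have "c = last r # tl c" using \<open>c \<noteq> []\<close> c(2) by (metis list.collapse)
    then show ?thesis
      using append_butlast_last_id[OF \<open>r \<noteq> []\<close>]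
      by (metis append.assoc append_Cons append_Nil s_def)
  qed
  have s_nth: "s ! (length r - 1 + k) = c ! k" for k
    using nth_append_length_plus[of "butlast r" c k] by (simp add: s_alt)
  have len_s: "length s = length r + length c - 1"
    using \<open>c \<noteq> []\<close> by (cases c) (simp_all add: s_def)
  show ?thesis
  proof (rule nth_equalityI)
    show "length (label_word P le (edge_labeling f) r c) = length (edge_word f c)"
      by (simp add: label_word_def edge_word_def)
    fix i assume "i < length (label_word P le (edge_labeling f) r c)"
    then have i: "Suc i < length c" by (simp add: label_word_def)
    have "label_word P le (edge_labeling f) r c ! i =
        chain_label P le (edge_labeling f) s (length r + i)"
      using i by (simp add: label_word_def s_def)
    also have "\<dots> = f (s ! (length r + i - 1)) (s ! (length r + i))"
      using m i len_s by (intro chain_label_edge_labeling) simp_all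
    also have "\<dots> = f (c ! i) (c ! Suc i)"
      using s_nth[of i] s_nth[of "Suc i"] \<open>r \<noteq> []\<close> by (cases r) simp_all
    finally show "label_word P le (edge_labeling f) r c ! i = edge_word f c ! i"
      using i by (simp add: edge_word_def nth_tl)
  qed
qed

lemma CR_labeling_edge_labelingI:
  assumes order: "partial_order_on' UNIV lle"
    and extend: "\<And>s. rooted_chain P le s \<Longrightarrow> \<exists>m. max_chain P le m \<and> take (length s) m = s"
    and increasing: "\<And>x y. x \<in> P \<Longrightarrow> y \<in> P \<Longrightarrow> le x y \<Longrightarrow>
       \<exists>!c. interval_chain P le x y c \<and> increasing_word lle (edge_word f c)"
  shows "CR_labeling P le UNIV lle (edge_labeling f)"
  unfolding CR_labeling_def
proof (intro conjI allI impI)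
  show "C_labeling P le UNIV lle (edge_labeling f)"
    using order by (rule C_labeling_edge_labeling)
  fix r y assume ry: "rooted_chain P le r \<and> y \<in> P \<and> le (last r) y"
  then have "last r \<in> P" by (auto simp: rooted_chain_def sat_chain_def)
  moreover have "interval_chain P le (last r) y c \<Longrightarrow>
      label_word P le (edge_labeling f) r c = edge_word f c" for c
    using ry by (intro label_word_edge_labeling[OF extend]) (simp_all add: interval_chain_def)
  ultimately show "\<exists>!c. interval_chain P le (last r) y c \<and>
      increasing_word lle (label_word P le (edge_labeling f) r c)"
    using increasing[of "last r" y] ry by (metis (no_types, lifting))
qed

lemma CW_labeling_edge_labelingI:
  assumes CR: "CR_labeling P le UNIV lle (edge_labeling f)"
    and extend: "\<And>s. rooted_chain P le s \<Longrightarrow> \<exists>m. max_chain P le m \<and> take (length s) m = s"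
    and switching: "rank_two_switching P le lle (edge_labeling f)"
    and ascent_free: "\<And>x y c c'. interval_chain P le x y c \<Longrightarrow> interval_chain P le x y c' \<Longrightarrow>
       ascent_free_word lle (edge_word f c) \<Longrightarrow> edge_word f c = edge_word f c' \<Longrightarrow> c = c'"
  shows "CW_labeling P le UNIV lle (edge_labeling f)"
  unfolding CW_labeling_def
proof (intro conjI allI impI CR switching notI)
  fix r y c c'
  assume asm: "rooted_chain P le r \<and> interval_chain P le (last r) y c \<and>
      interval_chain P le (last r) y c' \<and>
      ascent_free_word lle (label_word P le (edge_labeling f) r c) \<and>
      ascent_free_word lle (label_word P le (edge_labeling f) r c') \<and> c \<noteq> c'"
    and eq: "label_word P le (edge_labeling f) r c = label_word P le (edge_labeling f) r c'"
  have "label_word P le (edge_labeling f) r d = edge_word f d"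
    if "interval_chain P le (last r) y d" for d
    using asm that by (intro label_word_edge_labeling[OF extend]) (simp_all add: interval_chain_def)
  then show False
    using asm eq ascent_free[of "last r" y c c'] by metis
qed

lemma max_chain_list_update_iff:
  assumes m: "max_chain P le m" and i: "0 < i" "Suc i < length m"
  shows "max_chain P le (m[i := z]) \<longleftrightarrow> covers P le (m ! (i - 1)) z \<and> covers P le z (m ! Suc i)"
proof -
  let ?m = "m[i := z]"
  have m_covers: "covers P le (m ! k) (m ! Suc k)" if "Suc k < length m" for k
    using m that by (simp add: max_chain_def rooted_chain_def sat_chain_def)
  have "m \<noteq> []" using i by auto
  then have ends: "hd ?m = hd m" "last ?m = last m"
    using i by (simp_all add: hd_conv_nth last_conv_nth nth_list_update)
  show ?thesis
  proof
    assume "max_chain P le ?m"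
    then have "covers P le (?m ! k) (?m ! Suc k)" if "Suc k < length m" for k
      using that by (simp add: max_chain_def rooted_chain_def sat_chain_def)
    from this[of "i - 1"] this[of i] show "covers P le (m ! (i - 1)) z \<and> covers P le z (m ! Suc i)"
      using i by simp
  next
    assume new: "covers P le (m ! (i - 1)) z \<and> covers P le z (m ! Suc i)"
    have "covers P le (?m ! k) (?m ! Suc k)" if "Suc k < length m" for k
    proof -
      consider "Suc k = i" | "k = i" | "Suc k \<noteq> i" "k \<noteq> i" by blast
      then show ?thesis
        using new m_covers[OF that] that by cases (auto simp: nth_list_update)
    qed
    moreover have "set ?m \<subseteq> P"
      using m new set_update_subset_insert[of m i z]
      by (auto simp: max_chain_def rooted_chain_def sat_chain_def covers_def)
    ultimately show "max_chain P le ?m"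
      using m ends by (auto simp: max_chain_def rooted_chain_def sat_chain_def)
  qed
qed

definition swaps_labels :: "nat set \<Rightarrow> (nat \<Rightarrow> nat \<Rightarrow> bool) \<Rightarrow> (nat \<Rightarrow> nat \<Rightarrow> nat)
    \<Rightarrow> nat \<Rightarrow> nat \<Rightarrow> nat \<Rightarrow> nat \<Rightarrow> bool" where
  "swaps_labels P le f a b c z \<longleftrightarrow> z \<noteq> b \<and> covers P le a z \<and> covers P le z c \<and>
     f a z = f b c \<and> f z c = f a b"

lemma switches_edge_labeling_iff:
  assumes m: "max_chain P le m" and i: "0 < i" "Suc i < length m"
  shows "switches P le (edge_labeling f) m i z \<longleftrightarrow>
    swaps_labels P le f (m ! (i - 1)) (m ! i) (m ! Suc i) z"
proof -
  have "(\<forall>j. 1 \<le> j \<and> j < length m \<longrightarrow> edge_labeling f (m[i := z]) j =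
      (if j = i then edge_labeling f m (Suc i) else if j = Suc i then edge_labeling f m i
       else edge_labeling f m j))
    \<longleftrightarrow> f (m ! (i - 1)) z = f (m ! i) (m ! Suc i) \<and> f z (m ! Suc i) = f (m ! (i - 1)) (m ! i)"
    (is "(\<forall>j. ?P j) \<longleftrightarrow> ?swapped")
  proof
    assume "\<forall>j. ?P j"
    from this[rule_format, of i] this[rule_format, of "Suc i"] show ?swapped
      using i by (simp add: edge_labeling_def)
  next
    assume ?swapped
    then show "\<forall>j. ?P j"
      using i by (auto simp: edge_labeling_def nth_list_update)
  qed
  then show ?thesis
    unfolding switches_def swaps_labels_def using max_chain_list_update_iff[OF m i] by auto
qed

lemma rank_two_switching_edge_labelingI:
  assumes unique: "\<And>a b c. covers P le a b \<Longrightarrow> covers P le b c \<Longrightarrow> lless lle (f a b) (f b c) \<Longrightarrow>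
      \<exists>!z. swaps_labels P le f a b c z"
  shows "rank_two_switching P le lle (edge_labeling f)"
  unfolding rank_two_switching_def
proof (intro allI impI conjI)
  fix m i assume asc: "max_chain P le m \<and> ascent_at lle (edge_labeling f) m i"
  then have m: "max_chain P le m" and i: "0 < i" "Suc i < length m"
    by (auto simp: ascent_at_def)
  have cov: "covers P le (m ! k) (m ! Suc k)" if "Suc k < length m" for k
    using m that by (simp add: max_chain_def rooted_chain_def sat_chain_def)
  have "covers P le (m ! (i - 1)) (m ! i)" "covers P le (m ! i) (m ! Suc i)"
    using cov[of "i - 1"] cov[of i] i by simp_all
  then have unique_m: "\<exists>!z. swaps_labels P le f (m ! (i - 1)) (m ! i) (m ! Suc i) z"
    using asc unique by (simp add: ascent_at_def edge_labeling_def)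
  then show "\<exists>!z. switches P le (edge_labeling f) m i z"
    by (simp add: switches_edge_labeling_iff[OF m i])
  fix m' z z'
  assume asm: "max_chain P le m' \<and> take (i + 2) m' = take (i + 2) m \<and>
    switches P le (edge_labeling f) m i z \<and> switches P le (edge_labeling f) m' i z'"
  have same: "m' ! k = m ! k" if "k < i + 2" for k
    using asm nth_take[OF that, of m] nth_take[OF that, of m'] by simp
  have "length (take (i + 2) m') = i + 2"
    using asm i by simp
  then have i': "Suc i < length m'" by simp
  have "swaps_labels P le f (m ! (i - 1)) (m ! i) (m ! Suc i) z'"
    using asm switches_edge_labeling_iff[of P le m' i f z'] i i'
      same[of "i - 1"] same[of i] same[of "Suc i"]
    by simp
  moreover have "swaps_labels P le f (m ! (i - 1)) (m ! i) (m ! Suc i) z"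
    using asm switches_edge_labeling_iff[OF m i] by simp
  ultimately show "z = z'"
    using unique_m by blast
qed

lemma quad_exchange_edge_labeling_iff:
  "quad_exchange P le lle (edge_labeling f) c c' \<longleftrightarrow>
     (\<exists>m. max_chain P le m \<and> take (length c) m = c) \<and>
     (\<exists>i z. 0 < i \<and> Suc i < length c \<and>
        lless lle (f (c ! (i - 1)) (c ! i)) (f (c ! i) (c ! Suc i)) \<and>
        swaps_labels P le f (c ! (i - 1)) (c ! i) (c ! Suc i) z \<and> c' = c[i := z])"
  (is "_ \<longleftrightarrow> ?rhs")
proof
  assume "quad_exchange P le lle (edge_labeling f) c c'"
  then obtain m i z where m: "max_chain P le m" "take (length c) m = c" and i: "Suc i < length c"
    and asc: "ascent_at lle (edge_labeling f) m i" and sw: "switches P le (edge_labeling f) m i z"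
    and c': "c' = c[i := z]"
    unfolding quad_exchange_def by blast
  have same: "m ! k = c ! k" if "k < length c" for k
    using m nth_take[OF that, of m] by simp
  have "0 < i" "Suc i < length m"
    using asc by (auto simp: ascent_at_def)
  then show ?rhs
    using m i asc sw c' switches_edge_labeling_iff[OF m(1)]
      same[of "i - 1"] same[of i] same[of "Suc i"]
    by (auto simp: ascent_at_def edge_labeling_def)
next
  assume ?rhs
  then obtain m i z where m: "max_chain P le m" "take (length c) m = c"
    and i: "0 < i" "Suc i < length c"
    and asc: "lless lle (f (c ! (i - 1)) (c ! i)) (f (c ! i) (c ! Suc i))"
    and sw: "swaps_labels P le f (c ! (i - 1)) (c ! i) (c ! Suc i) z" and c': "c' = c[i := z]"
    by blast
  have same: "m ! k = c ! k" if "k < length c" for k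
    using m nth_take[OF that, of m] by simp
  have "length (take (length c) m) = length c"
    using m(2) by simp
  then have im: "Suc i < length m" using i by simp
  have "ascent_at lle (edge_labeling f) m i" "switches P le (edge_labeling f) m i z"
    using i im asc sw switches_edge_labeling_iff[OF m(1) i(1) im]
      same[of "i - 1"] same[of i] same[of "Suc i"]
    by (simp_all add: ascent_at_def edge_labeling_def)
  then show "quad_exchange P le lle (edge_labeling f) c c'"
    unfolding quad_exchange_def using m i c' by blast
qed

section \<open>Computing Q from representatives\<close>

definition rep_below :: "nat set \<Rightarrow> (nat \<Rightarrow> nat \<Rightarrow> bool) \<Rightarrow> (nat list \<Rightarrow> nat list)
    \<Rightarrow> nat list \<Rightarrow> nat list \<Rightarrow> bool" where
  "rep_below P le rep a b \<longleftrightarrow> (\<exists>c d. rooted_chain P le c \<and> rooted_chain P le d \<and>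
     rep c = a \<and> rep d = b \<and> set c \<subseteq> set d)"

lemma rtranclp_inj_on_transfer:
  assumes inj: "inj_on g S"
    and R: "\<And>X Y. R X Y \<Longrightarrow> X \<in> g ` S \<and> Y \<in> g ` S"
    and B: "\<And>a b. B a b \<Longrightarrow> a \<in> S \<and> b \<in> S"
    and RB: "\<And>a b. a \<in> S \<Longrightarrow> b \<in> S \<Longrightarrow> R (g a) (g b) \<longleftrightarrow> B a b"
    and ab: "a \<in> S" "b \<in> S"
  shows "R\<^sup>*\<^sup>* (g a) (g b) \<longleftrightarrow> B\<^sup>*\<^sup>* a b"
proof
  have "\<exists>b'\<in>S. Y = g b' \<and> B\<^sup>*\<^sup>* a b'" if "R\<^sup>*\<^sup>* (g a) Y" for Y
    using that
  proof (induction rule: rtranclp_induct)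
    case base
    then show ?case using ab by blast
  next
    case (step Y Z)
    then obtain b' where b': "b' \<in> S" "Y = g b'" "B\<^sup>*\<^sup>* a b'" by blast
    obtain b'' where b'': "b'' \<in> S" "Z = g b''" using R[OF step.hyps(2)] by blast
    have "B b' b''" using RB[OF b'(1) b''(1)] step.hyps(2) b'(2) b''(2) by simp
    then show ?case using b'' b'(3) by (blast intro: rtranclp.rtrancl_into_rtrancl)
  qed
  moreover assume "R\<^sup>*\<^sup>* (g a) (g b)"
  ultimately obtain b' where "b' \<in> S" "g b = g b'" "B\<^sup>*\<^sup>* a b'" by blast
  moreover from this have "b' = b" using inj ab(2) by (simp add: inj_on_eq_iff)
  ultimately show "B\<^sup>*\<^sup>* a b" by simp
next
  assume "B\<^sup>*\<^sup>* a b"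
  then show "R\<^sup>*\<^sup>* (g a) (g b)"
  proof (induction rule: rtranclp_induct)
    case (step b' b'')
    then show ?case using B RB by (meson rtranclp.rtrancl_into_rtrancl)
  qed simp
qed

lemma order_iso_Q_quotient:
  assumes exchange_rep: "\<And>c d. quad_exchange P le lle lam c d \<Longrightarrow> rep c = rep d"
    and rep_exchange: "\<And>c d. rooted_chain P le c \<Longrightarrow> rooted_chain P le d \<Longrightarrow> rep c = rep d \<Longrightarrow>
       (\<lambda>a b. quad_exchange P le lle lam a b \<or> quad_exchange P le lle lam b a)\<^sup>*\<^sup>* c d"
    and rep_rooted: "\<And>c. rooted_chain P le c \<Longrightarrow>
       rooted_chain P le (rep c) \<and> last (rep c) = last c \<and> rep (rep c) = rep c"
  shows "order_iso (rep ` {c. rooted_chain P le c}) (rep_below P le rep)\<^sup>*\<^sup>*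
     (Q_carrier P le lle lam) (Q_le P le lle lam)"
proof -
  let ?S = "rep ` {c. rooted_chain P le c}"
  let ?cls = "\<lambda>c. {d. Q_equiv P le lle lam c d}"
  have exchange_closure_rep: "rep c = rep d"
    if "(\<lambda>a b. quad_exchange P le lle lam a b \<or> quad_exchange P le lle lam b a)\<^sup>*\<^sup>* c d" for c d
    using that by (induction rule: rtranclp_induct) (auto dest: exchange_rep)
  have equiv: "Q_equiv P le lle lam c d \<longleftrightarrow>
      rooted_chain P le c \<and> rooted_chain P le d \<and> rep c = rep d" for c d
  proof
    assume "Q_equiv P le lle lam c d"
    then show "rooted_chain P le c \<and> rooted_chain P le d \<and> rep c = rep d"
      unfolding Q_equiv_def using exchange_closure_rep by blast
  next
    assume cd: "rooted_chain P le c \<and> rooted_chain P le d \<and> rep c = rep d"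
    then have "last c = last d" using rep_rooted by metis
    then show "Q_equiv P le lle lam c d"
      unfolding Q_equiv_def using cd rep_exchange by blast
  qed
  have cls: "?cls c = {d. rooted_chain P le d \<and> rep d = rep c}" if "rooted_chain P le c" for c
    using that by (auto simp: equiv)
  have cls_rep: "?cls (rep c) = ?cls c" if "rooted_chain P le c" for c
    using that rep_rooted by (simp add: cls)
  have cls_S: "?cls a = {d. rooted_chain P le d \<and> rep d = a}" if "a \<in> ?S" for a
    using that cls cls_rep by auto
  have carrier: "Q_carrier P le lle lam = ?cls ` ?S"
    unfolding Q_carrier_def using cls_rep by auto
  have inj: "inj_on ?cls ?S"
  proof (rule inj_onI)
    fix a b assume "a \<in> ?S" "b \<in> ?S" "?cls a = ?cls b"
    then show "a = b" using rep_rooted by (auto simp: cls_S set_eq_iff)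
  qed
  have below: "(\<exists>c\<in>?cls a. \<exists>d\<in>?cls b. set c \<subseteq> set d) \<longleftrightarrow> rep_below P le rep a b"
    if "a \<in> ?S" "b \<in> ?S" for a b
    using that by (auto simp: cls_S rep_below_def)
  have "Q_le P le lle lam (?cls a) (?cls b) \<longleftrightarrow> (rep_below P le rep)\<^sup>*\<^sup>* a b"
    if "a \<in> ?S" "b \<in> ?S" for a b
    unfolding Q_le_def
  proof (rule rtranclp_inj_on_transfer[OF inj _ _ _ that])
    show "rep_below P le rep a b \<Longrightarrow> a \<in> ?S \<and> b \<in> ?S" for a b
      by (auto simp: rep_below_def)
  qed (use carrier below in auto)
  then show ?thesis
    unfolding order_iso_def using inj carrier by (auto simp: bij_betw_def)
qed

section \<open>Twins\<close>

definition has_twins :: "'a set \<Rightarrow> ('a \<Rightarrow> 'a \<Rightarrow> bool) \<Rightarrow> bool" where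
  "has_twins A r \<longleftrightarrow> (\<exists>x\<in>A. \<exists>y\<in>A. x \<noteq> y \<and>
     (\<forall>z\<in>A. z \<noteq> x \<longrightarrow> z \<noteq> y \<longrightarrow> (r z x \<longleftrightarrow> r z y) \<and> (r x z \<longleftrightarrow> r y z)))"

lemma order_iso_sym:
  assumes "order_iso A ra B rb"
  shows "order_iso B rb A ra"
proof -
  obtain f where f: "bij_betw f A B" "\<forall>x\<in>A. \<forall>y\<in>A. ra x y \<longleftrightarrow> rb (f x) (f y)"
    using assms unfolding order_iso_def by blast
  have "bij_betw (inv_into A f) B A"
    using f(1) by (rule bij_betw_inv_into)
  moreover have "rb x y \<longleftrightarrow> ra (inv_into A f x) (inv_into A f y)" if "x \<in> B" "y \<in> B" for x y
  proof -
    have "inv_into A f x \<in> A" "inv_into A f y \<in> A"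
      "f (inv_into A f x) = x" "f (inv_into A f y) = y"
      using f(1) that by (auto simp: bij_betw_def inv_into_into f_inv_into_f)
    then show ?thesis using f(2) by simp
  qed
  ultimately show ?thesis
    unfolding order_iso_def by blast
qed

lemma has_twins_order_iso:
  assumes "order_iso A ra B rb" "has_twins A ra"
  shows "has_twins B rb"
proof -
  obtain f where f: "bij_betw f A B" "\<forall>x\<in>A. \<forall>y\<in>A. ra x y \<longleftrightarrow> rb (f x) (f y)"
    using assms(1) unfolding order_iso_def by blast
  obtain x y where xy: "x \<in> A" "y \<in> A" "x \<noteq> y"
    and twin: "\<forall>z\<in>A. z \<noteq> x \<longrightarrow> z \<noteq> y \<longrightarrow> (ra z x \<longleftrightarrow> ra z y) \<and> (ra x z \<longleftrightarrow> ra y z)"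
    using assms(2) unfolding has_twins_def by blast
  have "f x \<noteq> f y" "f x \<in> B" "f y \<in> B"
    using f(1) xy by (auto simp: bij_betw_def inj_on_eq_iff)
  moreover have "(rb z (f x) \<longleftrightarrow> rb z (f y)) \<and> (rb (f x) z \<longleftrightarrow> rb (f y) z)"
    if "z \<in> B" "z \<noteq> f x" "z \<noteq> f y" for z
  proof -
    obtain w where w: "w \<in> A" "z = f w" using f(1) \<open>z \<in> B\<close> by (auto simp: bij_betw_def)
    then have "(ra w x \<longleftrightarrow> ra w y) \<and> (ra x w \<longleftrightarrow> ra y w)" using twin that by auto
    then show ?thesis using f(2) w xy by simp
  qed
  ultimately show ?thesis
    unfolding has_twins_def by blast
qed

lemma has_twins_order_iso_iff:
  assumes "order_iso A ra B rb"
  shows "has_twins A ra \<longleftrightarrow> has_twins B rb"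
  using has_twins_order_iso[OF assms] has_twins_order_iso[OF order_iso_sym[OF assms]] by blast

section \<open>The counterexample poset\<close>

definition cex_elements :: "nat list" where
  "cex_elements = [0, 1, 2, 3, 4, 5]"

definition cex_P :: "nat set" where
  "cex_P = set cex_elements"

definition cex_le :: "nat \<Rightarrow> nat \<Rightarrow> bool" where
  "cex_le x y \<longleftrightarrow> x = y \<or> x = 0 \<or> (y = 4 \<and> x \<in> {1, 2, 3}) \<or> (y = 5 \<and> x \<in> {1, 2})"

definition cex_covers :: "(nat \<times> nat) list" where
  "cex_covers = [(0, 1), (0, 2), (0, 3), (1, 4), (2, 4), (3, 4), (1, 5), (2, 5)]"

definition cex_chains :: "nat list list" where
  "cex_chains = [[0], [1], [2], [3], [4], [5], [0, 1], [0, 2], [0, 3], [1, 4], [2, 4], [3, 4],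
     [1, 5], [2, 5], [0, 1, 4], [0, 1, 5], [0, 2, 4], [0, 2, 5], [0, 3, 4]]"

definition cex_rooted_chains :: "nat list list" where
  "cex_rooted_chains =
     [[0], [0, 1], [0, 2], [0, 3], [0, 1, 4], [0, 1, 5], [0, 2, 4], [0, 2, 5], [0, 3, 4]]"

definition cex_maximal_chains :: "nat list list" where
  "cex_maximal_chains = [[0, 1, 4], [0, 1, 5], [0, 2, 4], [0, 2, 5], [0, 3, 4]]"

lemma covers_cex_iff: "covers cex_P cex_le x y \<longleftrightarrow> (x, y) \<in> set cex_covers"
proof -
  have "\<forall>x\<in>cex_P. \<forall>y\<in>cex_P. covers cex_P cex_le x y \<longleftrightarrow> (x, y) \<in> set cex_covers"
    unfolding covers_def cex_P_def cex_elements_def by (simp add: cex_le_def cex_covers_def)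
  moreover have "covers cex_P cex_le x y \<Longrightarrow> x \<in> cex_P \<and> y \<in> cex_P"
    by (simp add: covers_def)
  moreover have "(x, y) \<in> set cex_covers \<Longrightarrow> x \<in> cex_P \<and> y \<in> cex_P"
    by (auto simp: cex_covers_def cex_P_def cex_elements_def)
  ultimately show ?thesis by blast
qed

lemma sat_chain_cex_iff: "sat_chain cex_P cex_le c \<longleftrightarrow> c \<in> set cex_chains"
proof (induction c)
  case Nil
  then show ?case by (simp add: sat_chain_def cex_chains_def)
next
  case (Cons x c)
  have "\<forall>c\<in>set cex_chains. \<forall>x. x # c \<in> set cex_chains \<longleftrightarrow> (x, hd c) \<in> set cex_covers"
    by (simp add: cex_chains_def cex_covers_def)
  moreover have "x # c \<in> set cex_chains \<Longrightarrow> c = [] \<or> c \<in> set cex_chains"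
    by (auto simp: cex_chains_def)
  moreover have "[x] \<in> set cex_chains \<longleftrightarrow> x \<in> cex_P"
    by (auto simp: cex_chains_def cex_P_def cex_elements_def)
  ultimately show ?case
    using Cons.IH by (auto simp: sat_chain_Cons covers_cex_iff)
qed

lemma rooted_chain_cex_iff: "rooted_chain cex_P cex_le c \<longleftrightarrow> c \<in> set cex_rooted_chains"
proof -
  have bottom: "(\<forall>x\<in>cex_P. cex_le z x) \<longleftrightarrow> z = 0" for z
    by (auto simp: cex_P_def cex_elements_def cex_le_def)
  have rooted: "cex_rooted_chains = filter (\<lambda>c. hd c = 0) cex_chains"
    by (simp add: cex_chains_def cex_rooted_chains_def)
  show ?thesis
    unfolding rooted_chain_def sat_chain_cex_iff bottom rooted by simp
qed

lemma max_chain_cex_iff: "max_chain cex_P cex_le c \<longleftrightarrow> c \<in> set cex_maximal_chains"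
proof -
  have maximal: "(\<forall>y\<in>cex_P. cex_le z y \<longrightarrow> y = z) \<longleftrightarrow> z \<notin> {0, 1, 2, 3}" for z
    by (auto simp: cex_P_def cex_elements_def cex_le_def)
  have maximal_chains:
    "cex_maximal_chains = filter (\<lambda>c. last c \<notin> {0, 1, 2, 3}) cex_rooted_chains"
    by (simp add: cex_rooted_chains_def cex_maximal_chains_def)
  show ?thesis
    unfolding max_chain_def rooted_chain_cex_iff maximal maximal_chains by simp
qed

lemma interval_chain_cex_iff:
  "interval_chain cex_P cex_le x y c \<longleftrightarrow> c \<in> set cex_chains \<and> hd c = x \<and> last c = y"
  by (simp add: interval_chain_def sat_chain_cex_iff)

lemma finite_graded_poset_cex: "finite_graded_poset_0 cex_P cex_le"
  unfolding finite_graded_poset_0_def rooted_chain_cex_iff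
proof (intro conjI)
  show "finite cex_P" by (simp add: cex_P_def cex_elements_def)
  show "partial_order_on' cex_P cex_le"
    by (auto simp: partial_order_on'_def cex_P_def cex_elements_def cex_le_def)
  show "\<exists>z\<in>cex_P. \<forall>x\<in>cex_P. cex_le z x"
    by (auto simp: cex_P_def cex_elements_def cex_le_def)
  show "\<forall>c d. c \<in> set cex_rooted_chains \<and> d \<in> set cex_rooted_chains \<and> last c = last d \<longrightarrow>
      length c = length d"
    by (auto simp: cex_rooted_chains_def)
qed

lemma rooted_chain_extends_cex:
  assumes "rooted_chain cex_P cex_le s"
  shows "\<exists>m. max_chain cex_P cex_le m \<and> take (length s) m = s"
proof -
  have "\<forall>s\<in>set cex_rooted_chains. \<exists>m\<in>set cex_maximal_chains. take (length s) m = s"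
    by (simp add: cex_rooted_chains_def cex_maximal_chains_def)
  then show ?thesis
    using assms unfolding rooted_chain_cex_iff max_chain_cex_iff by blast
qed

lemma rooted_chains_cex: "{c. rooted_chain cex_P cex_le c} = set cex_rooted_chains"
  by (simp add: rooted_chain_cex_iff)

lemma ex1_interval_chain_cex_iff:
  "(\<exists>!c. interval_chain cex_P cex_le x y c \<and> Q c) \<longleftrightarrow>
     length (filter (\<lambda>c. hd c = x \<and> last c = y \<and> Q c) cex_chains) = 1"
proof -
  have "distinct cex_chains" by (simp add: cex_chains_def)
  then have "(\<exists>!c. c \<in> set cex_chains \<and> (hd c = x \<and> last c = y \<and> Q c)) \<longleftrightarrow>
     length (filter (\<lambda>c. hd c = x \<and> last c = y \<and> Q c) cex_chains) = 1"
    by (rule ex1_iff_length_filter)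
  then show ?thesis
    by (simp add: interval_chain_cex_iff conj_assoc)
qed

lemma distinct_cex_elements: "distinct cex_elements"
  by (simp add: cex_elements_def)

lemma ex1_swaps_labels_cex_iff:
  "(\<exists>!z. swaps_labels cex_P cex_le f a b c z) \<longleftrightarrow>
     length (filter (swaps_labels cex_P cex_le f a b c) cex_elements) = 1"
proof -
  have "z \<in> set cex_elements" if "swaps_labels cex_P cex_le f a b c z" for z
    using that by (simp add: swaps_labels_def covers_def cex_P_def)
  then have "(\<exists>!z. swaps_labels cex_P cex_le f a b c z) \<longleftrightarrow>
      (\<exists>!z. z \<in> set cex_elements \<and> swaps_labels cex_P cex_le f a b c z)"
    unfolding Ex1_def by blast
  also have "\<dots> \<longleftrightarrow> length (filter (swaps_labels cex_P cex_le f a b c) cex_elements) = 1"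
    by (rule ex1_iff_length_filter[OF distinct_cex_elements])
  finally show ?thesis .
qed

lemma CW_labeling_cex:
  assumes increasing: "\<forall>x\<in>set cex_elements. \<forall>y\<in>set cex_elements. cex_le x y \<longrightarrow>
      length (filter (\<lambda>c. hd c = x \<and> last c = y \<and> increasing_word (\<le>) (edge_word f c))
        cex_chains) = 1"
    and switching: "\<forall>(a, b)\<in>set cex_covers. \<forall>(b', c)\<in>set cex_covers.
      b' = b \<and> f a b < f b c \<longrightarrow> length (filter (swaps_labels cex_P cex_le f a b c) cex_elements) = 1"
    and ascent_free: "\<forall>c\<in>set cex_chains. \<forall>c'\<in>set cex_chains.
      hd c = hd c' \<and> last c = last c' \<and> ascent_free_word (\<le>) (edge_word f c) \<and>
      edge_word f c = edge_word f c' \<longrightarrow> c = c'"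
  shows "CW_labeling cex_P cex_le UNIV (\<le>) (edge_labeling f)"
proof (rule CW_labeling_edge_labelingI[OF _ rooted_chain_extends_cex])
  have order: "partial_order_on' UNIV ((\<le>) :: nat \<Rightarrow> nat \<Rightarrow> bool)"
    by (auto simp: partial_order_on'_def)
  show "CR_labeling cex_P cex_le UNIV (\<le>) (edge_labeling f)"
  proof (rule CR_labeling_edge_labelingI[OF order rooted_chain_extends_cex])
    fix x y assume "x \<in> cex_P" "y \<in> cex_P" "cex_le x y"
    moreover from this have "x \<in> set cex_elements" "y \<in> set cex_elements"
      by (simp_all add: cex_P_def)
    ultimately show "\<exists>!c. interval_chain cex_P cex_le x y c \<and> increasing_word (\<le>) (edge_word f c)"
      using increasing by (simp add: ex1_interval_chain_cex_iff)
  qed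
  show "rank_two_switching cex_P cex_le (\<le>) (edge_labeling f)"
  proof (rule rank_two_switching_edge_labelingI)
    fix a b c assume "covers cex_P cex_le a b" "covers cex_P cex_le b c" "lless (\<le>) (f a b) (f b c)"
    then have ab: "(a, b) \<in> set cex_covers" and bc: "(b, c) \<in> set cex_covers" and "f a b < f b c"
      by (simp_all add: covers_cex_iff)
    then show "\<exists>!z. swaps_labels cex_P cex_le f a b c z"
      using bspec[OF bspec[OF switching ab, simplified] bc] by (simp add: ex1_swaps_labels_cex_iff)
  qed
  show "c = c'" if "interval_chain cex_P cex_le x y c" "interval_chain cex_P cex_le x y c'"
    "ascent_free_word (\<le>) (edge_word f c)" "edge_word f c = edge_word f c'" for x y c c'
    using that ascent_free by (simp add: interval_chain_cex_iff)
qed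

lemma quad_exchange_cex_iff:
  "quad_exchange cex_P cex_le (\<le>) (edge_labeling f) c c' \<longleftrightarrow>
     c \<in> set cex_maximal_chains \<and> f (c ! 0) (c ! 1) < f (c ! 1) (c ! 2) \<and>
     (\<exists>z\<in>set cex_elements. swaps_labels cex_P cex_le f (c ! 0) (c ! 1) (c ! 2) z \<and> c' = c[1 := z])"
  (is "_ \<longleftrightarrow> ?rhs")
proof
  have length_3: "length m = 3" if "m \<in> set cex_maximal_chains" for m
    using that by (auto simp: cex_maximal_chains_def)
  {
    assume "quad_exchange cex_P cex_le (\<le>) (edge_labeling f) c c'"
    then obtain m i z where m: "m \<in> set cex_maximal_chains" "take (length c) m = c"
      and i: "0 < i" "Suc i < length c"
      and swap: "lless (\<le>) (f (c ! (i - 1)) (c ! i)) (f (c ! i) (c ! Suc i))"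
        "swaps_labels cex_P cex_le f (c ! (i - 1)) (c ! i) (c ! Suc i) z" "c' = c[i := z]"
      unfolding quad_exchange_edge_labeling_iff max_chain_cex_iff by blast
    have "length (take (length c) m) = length c" using m(2) by simp
    then have "length c = 3" "c = m" using m length_3 i by auto
    moreover from this(1) have "i = 1" using i by simp
    moreover have "z \<in> set cex_elements"
      using swap(2) by (simp add: swaps_labels_def covers_def cex_P_def)
    ultimately show ?rhs
      using m i swap by (auto simp: numeral_2_eq_2)
  next
    assume ?rhs
    then obtain z where c: "c \<in> set cex_maximal_chains" "f (c ! 0) (c ! 1) < f (c ! 1) (c ! 2)"
      and z: "swaps_labels cex_P cex_le f (c ! 0) (c ! 1) (c ! 2) z" "c' = c[1 := z]"
      by blast
    have "0 < (1::nat) \<and> Suc 1 < length c \<and>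
        lless (\<le>) (f (c ! (1 - 1)) (c ! 1)) (f (c ! 1) (c ! Suc 1)) \<and>
        swaps_labels cex_P cex_le f (c ! (1 - 1)) (c ! 1) (c ! Suc 1) z \<and> c' = c[1 := z]"
      using c z length_3[OF c(1)] by (simp add: numeral_2_eq_2)
    then show "quad_exchange cex_P cex_le (\<le>) (edge_labeling f) c c'"
      unfolding quad_exchange_edge_labeling_iff max_chain_cex_iff using c(1) take_all[of c] by blast
  }
qed

lemma rtranclp_rep_below_cex:
  assumes complete: "\<forall>c\<in>set cex_rooted_chains. \<forall>d\<in>set cex_rooted_chains.
      set c \<subseteq> set d \<longrightarrow> rep c = rep d \<or> (rep c, rep d) \<in> set B"
    and sound: "\<forall>(a, b)\<in>set B. \<exists>c\<in>set cex_rooted_chains. \<exists>d\<in>set cex_rooted_chains.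
      rep c = a \<and> rep d = b \<and> set c \<subseteq> set d"
    and trans: "transp (\<lambda>a b. (a, b) \<in> set B)"
  shows "(rep_below cex_P cex_le rep)\<^sup>*\<^sup>* a b \<longleftrightarrow> a = b \<or> (a, b) \<in> set B"
proof (rule rtranclp_eq_reflclp_if_between[OF _ _ trans])
  show "a = b \<or> (a, b) \<in> set B" if "rep_below cex_P cex_le rep a b" for a b
    using that complete by (auto simp: rep_below_def rooted_chain_cex_iff)
  show "rep_below cex_P cex_le rep a b" if "(a, b) \<in> set B" for a b
    using bspec[OF sound that] by (auto simp: rep_below_def rooted_chain_cex_iff)
qed

lemma order_iso_Q_cex:
  assumes exchange: "\<And>c d. quad_exchange cex_P cex_le (\<le>) (edge_labeling f) c d \<longleftrightarrow> (c, d) \<in> X"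
    and rep_eq: "\<And>c d. rep c = rep d \<longleftrightarrow> c = d \<or> (c, d) \<in> X \<or> (d, c) \<in> X"
    and rep_rooted: "\<forall>c\<in>set cex_rooted_chains.
      rep c \<in> set cex_rooted_chains \<and> last (rep c) = last c \<and> rep (rep c) = rep c"
    and complete: "\<forall>c\<in>set cex_rooted_chains. \<forall>d\<in>set cex_rooted_chains.
      set c \<subseteq> set d \<longrightarrow> rep c = rep d \<or> (rep c, rep d) \<in> set B"
    and sound: "\<forall>(a, b)\<in>set B. \<exists>c\<in>set cex_rooted_chains. \<exists>d\<in>set cex_rooted_chains.
      rep c = a \<and> rep d = b \<and> set c \<subseteq> set d"
    and trans: "transp (\<lambda>a b. (a, b) \<in> set B)"
  shows "order_iso (rep ` set cex_rooted_chains) (\<lambda>a b. a = b \<or> (a, b) \<in> set B)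
    (Q_carrier cex_P cex_le (\<le>) (edge_labeling f)) (Q_le cex_P cex_le (\<le>) (edge_labeling f))"
proof -
  have "(rep_below cex_P cex_le rep)\<^sup>*\<^sup>* = (\<lambda>a b. a = b \<or> (a, b) \<in> set B)"
    by (intro ext rtranclp_rep_below_cex[OF complete sound trans])
  moreover have "order_iso (rep ` {c. rooted_chain cex_P cex_le c}) (rep_below cex_P cex_le rep)\<^sup>*\<^sup>*
    (Q_carrier cex_P cex_le (\<le>) (edge_labeling f)) (Q_le cex_P cex_le (\<le>) (edge_labeling f))"
  proof (rule order_iso_Q_quotient)
    fix c d
    show "quad_exchange cex_P cex_le (\<le>) (edge_labeling f) c d \<Longrightarrow> rep c = rep d"
      using exchange rep_eq by blast
    show "(\<lambda>a b. quad_exchange cex_P cex_le (\<le>) (edge_labeling f) a b \<or>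
        quad_exchange cex_P cex_le (\<le>) (edge_labeling f) b a)\<^sup>*\<^sup>* c d" if "rep c = rep d"
      using that by (auto simp: rep_eq exchange)
    show "rooted_chain cex_P cex_le (rep c) \<and> last (rep c) = last c \<and> rep (rep c) = rep c"
      if "rooted_chain cex_P cex_le c"
      using that rep_rooted by (simp add: rooted_chain_cex_iff)
  qed
  ultimately show ?thesis
    by (simp add: rooted_chains_cex)
qed

definition lab1 :: "nat \<Rightarrow> nat \<Rightarrow> nat" where
  "lab1 x y = (if x = 0 then y else if x = 1 then 2 else 1)"

definition lab2 :: "nat \<Rightarrow> nat \<Rightarrow> nat" where
  "lab2 x y = (if x = 0 then y else if x = 1 then (if y = 4 then 3 else 2) else 1)"

lemma CW_labeling_lab1: "CW_labeling cex_P cex_le UNIV (\<le>) (edge_labeling lab1)"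
  by (rule CW_labeling_cex)
    (simp_all add: cex_elements_def cex_le_def cex_chains_def cex_covers_def lab1_def
      swaps_labels_def covers_cex_iff)

lemma CW_labeling_lab2: "CW_labeling cex_P cex_le UNIV (\<le>) (edge_labeling lab2)"
  by (rule CW_labeling_cex)
    (simp_all add: cex_elements_def cex_le_def cex_chains_def cex_covers_def lab2_def
      swaps_labels_def covers_cex_iff)

lemma quad_exchange_lab1_iff:
  "quad_exchange cex_P cex_le (\<le>) (edge_labeling lab1) c c' \<longleftrightarrow>
     (c, c') \<in> {([0, 1, 4], [0, 2, 4]), ([0, 1, 5], [0, 2, 5])}"
  unfolding quad_exchange_cex_iff
  by (auto simp: cex_maximal_chains_def cex_elements_def lab1_def swaps_labels_def covers_cex_iff
      cex_covers_def)

definition rep1 :: "nat list \<Rightarrow> nat list" where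
  "rep1 c = (if c = [0, 2, 4] then [0, 1, 4] else if c = [0, 2, 5] then [0, 1, 5] else c)"

definition below1 :: "(nat list \<times> nat list) list" where
  "below1 = [([0], [0, 1]), ([0], [0, 2]), ([0], [0, 3]), ([0], [0, 1, 4]), ([0], [0, 1, 5]),
     ([0], [0, 3, 4]), ([0, 1], [0, 1, 4]), ([0, 1], [0, 1, 5]), ([0, 2], [0, 1, 4]),
     ([0, 2], [0, 1, 5]), ([0, 3], [0, 3, 4])]"

lemma quad_exchange_lab2_iff:
  "quad_exchange cex_P cex_le (\<le>) (edge_labeling lab2) c c' \<longleftrightarrow>
     (c, c') \<in> {([0, 1, 4], [0, 3, 4]), ([0, 1, 5], [0, 2, 5])}"
  unfolding quad_exchange_cex_iff
  by (auto simp: cex_maximal_chains_def cex_elements_def lab2_def swaps_labels_def covers_cex_iff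
      cex_covers_def)

definition rep2 :: "nat list \<Rightarrow> nat list" where
  "rep2 c = (if c = [0, 3, 4] then [0, 1, 4] else if c = [0, 2, 5] then [0, 1, 5] else c)"

definition below2 :: "(nat list \<times> nat list) list" where
  "below2 = [([0], [0, 1]), ([0], [0, 2]), ([0], [0, 3]), ([0], [0, 1, 4]), ([0], [0, 1, 5]),
     ([0], [0, 2, 4]), ([0, 1], [0, 1, 4]), ([0, 1], [0, 1, 5]), ([0, 2], [0, 2, 4]),
     ([0, 2], [0, 1, 5]), ([0, 3], [0, 1, 4])]"

lemma order_iso_Q_lab1:
  "order_iso (rep1 ` set cex_rooted_chains) (\<lambda>a b. a = b \<or> (a, b) \<in> set below1)
     (Q_carrier cex_P cex_le (\<le>) (edge_labeling lab1)) (Q_le cex_P cex_le (\<le>) (edge_labeling lab1))"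
  by (rule order_iso_Q_cex[OF quad_exchange_lab1_iff])
    (auto simp: rep1_def below1_def cex_rooted_chains_def transp_def split: if_splits)

lemma order_iso_Q_lab2:
  "order_iso (rep2 ` set cex_rooted_chains) (\<lambda>a b. a = b \<or> (a, b) \<in> set below2)
     (Q_carrier cex_P cex_le (\<le>) (edge_labeling lab2)) (Q_le cex_P cex_le (\<le>) (edge_labeling lab2))"
  by (rule order_iso_Q_cex[OF quad_exchange_lab2_iff])
    (auto simp: rep2_def below2_def cex_rooted_chains_def transp_def split: if_splits)

lemma has_twins_lab1:
  "has_twins (rep1 ` set cex_rooted_chains) (\<lambda>a b. a = b \<or> (a, b) \<in> set below1)"
  by (simp add: has_twins_def cex_rooted_chains_def rep1_def below1_def)

lemma not_has_twins_lab2: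
  "\<not> has_twins (rep2 ` set cex_rooted_chains) (\<lambda>a b. a = b \<or> (a, b) \<in> set below2)"
  by (simp add: has_twins_def cex_rooted_chains_def rep2_def below2_def)

theorem theorem5p22:
  shows "\<exists>(P :: nat set) le L1 lle1 lam1 L2 lle2 lam2.
     finite_graded_poset_0 P le \<and>
     CW_labeling P le L1 lle1 lam1 \<and> CW_labeling P le L2 lle2 lam2 \<and>
     \<not> order_iso (Q_carrier P le lle1 lam1) (Q_le P le lle1 lam1)
                 (Q_carrier P le lle2 lam2) (Q_le P le lle2 lam2)"
proof -
  let ?Q1 = "Q_carrier cex_P cex_le (\<le>) (edge_labeling lab1)"
    and ?le1 = "Q_le cex_P cex_le (\<le>) (edge_labeling lab1)"
    and ?Q2 = "Q_carrier cex_P cex_le (\<le>) (edge_labeling lab2)"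
    and ?le2 = "Q_le cex_P cex_le (\<le>) (edge_labeling lab2)"
  have "has_twins ?Q1 ?le1"
    using has_twins_lab1 order_iso_Q_lab1 by (simp add: has_twins_order_iso_iff)
  moreover have "\<not> has_twins ?Q2 ?le2"
    using not_has_twins_lab2 order_iso_Q_lab2 by (simp add: has_twins_order_iso_iff)
  ultimately have "\<not> order_iso ?Q1 ?le1 ?Q2 ?le2"
    using has_twins_order_iso by blast
  then show ?thesis
    using finite_graded_poset_cex CW_labeling_lab1 CW_labeling_lab2 by blast
qed

end
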